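(* There exists an upwards-oriented translating soliton in $\mathbb{H}^2\times\mathbb{R}$ which is rotationally symmetric about a vertical axis and is an entire vertical graph over $\mathbb{H}^2$.
   Context: $\mathbb{H}^2\times\mathbb{R}$ carries the product metric $\langle\cdot,\cdot\rangle$ of the hyperbolic plane of curvature $-1$ and the real line; $\partial_z$ is the unit vertical vector field. An oriented immersed surface $M$ with unit normal $\eta$ and mean curvature $H_M$ (half the trace of the second fundamental form with respect to $\eta$) is a translating soliton if $H_M=\langle\eta,\partial_z\rangle$ at every point. Upwards-oriented means $\langle\eta,\partial_z\rangle>0$ on the graph. A vertical axis is a line $\{o\}\times\mathbb{R}$, $o\in\mathbb{H}^2$, and rotations about it are the isometries $(x,z)\mapsto(\rho(x),z)$ with $\rho$ a hyperbolic rotation fixing $o$. *)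

theory Defs
  imports "HOL-Analysis.Analysis"
begin

text \<open>H^2 is the unit disk in the complex plane with
  the conformal metric lam(z)^2 |dz|^2, lam(z) = 2/(1-|z|^2) (curvature -1).
  H^2 x R is the product; a vertical graph is z = u(x), u : H^2 \<Rightarrow> R.\<close>

definition hdisk :: "complex set" where
  "hdisk = ball 0 1"

definition lam :: "complex \<Rightarrow> real" where
  "lam z = 2 / (1 - (cmod z)\<^sup>2)"

definition egrad :: "(complex \<Rightarrow> real) \<Rightarrow> complex \<Rightarrow> complex" where
  "egrad u z = Complex (frechet_derivative u (at z) 1) (frechet_derivative u (at z) \<i>)"

definition ediv :: "(complex \<Rightarrow> complex) \<Rightarrow> complex \<Rightarrow> real" where
  "ediv X z = Re (frechet_derivative X (at z) 1) + Im (frechet_derivative X (at z) \<i>)"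

text \<open>Riemannian gradient, squared norm and divergence for the hyperbolic metric
  g = lam^2 delta in these coordinates.\<close>
definition hgrad :: "(complex \<Rightarrow> real) \<Rightarrow> complex \<Rightarrow> complex" where
  "hgrad u z = (1 / (lam z)\<^sup>2) *\<^sub>R egrad u z"

definition hnormsq :: "complex \<Rightarrow> complex \<Rightarrow> real" where
  "hnormsq z v = (lam z)\<^sup>2 * (cmod v)\<^sup>2"

definition hdiv :: "(complex \<Rightarrow> complex) \<Rightarrow> complex \<Rightarrow> real" where
  "hdiv X z = (1 / (lam z)\<^sup>2) * ediv (\<lambda>w. (lam w)\<^sup>2 *\<^sub>R X w) z"

text \<open>For the graph of u, W = sqrt(1+|grad u|^2); the upward unit normal is
  eta = (-grad u + d/dz)/W, so <eta, d/dz> = 1/W, and the mean curvature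
  (half the trace of the second fundamental form w.r.t. eta) is
  (1/2) div (grad u / W).\<close>
definition Wg :: "(complex \<Rightarrow> real) \<Rightarrow> complex \<Rightarrow> real" where
  "Wg u z = sqrt (1 + hnormsq z (hgrad u z))"

definition graph_unit_field :: "(complex \<Rightarrow> real) \<Rightarrow> complex \<Rightarrow> complex" where
  "graph_unit_field u w = (1 / Wg u w) *\<^sub>R hgrad u w"

definition graph_mean_curv :: "(complex \<Rightarrow> real) \<Rightarrow> complex \<Rightarrow> real" where
  "graph_mean_curv u z = (1/2) * hdiv (graph_unit_field u) z"

definition normal_vert :: "(complex \<Rightarrow> real) \<Rightarrow> complex \<Rightarrow> real" where
  "normal_vert u z = 1 / Wg u z"

definition C2_on_disk :: "(complex \<Rightarrow> real) \<Rightarrow> bool" where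
  "C2_on_disk u \<longleftrightarrow>
     (\<forall>z\<in>hdisk. u differentiable (at z) \<and> egrad u differentiable (at z)) \<and>
     continuous_on hdisk (egrad u) \<and>
     (\<forall>v. continuous_on hdisk (\<lambda>z. frechet_derivative (egrad u) (at z) v))"

definition entire_upward_translator_graph :: "(complex \<Rightarrow> real) \<Rightarrow> bool" where
  "entire_upward_translator_graph u \<longleftrightarrow>
     C2_on_disk u \<and>
     (\<forall>z\<in>hdisk. normal_vert u z > 0 \<and> graph_mean_curv u z = normal_vert u z)"

text \<open>Disk automorphism moving p to 0, and hyperbolic rotations about p.\<close>
definition mob :: "complex \<Rightarrow> complex \<Rightarrow> complex" where
  "mob p z = (z - p) / (1 - cnj p * z)"

definition hrot :: "complex \<Rightarrow> real \<Rightarrow> complex \<Rightarrow> complex" where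
  "hrot p \<theta> z = mob (- p) (cis \<theta> * mob p z)"

definition rot_symmetric :: "complex \<Rightarrow> (complex \<Rightarrow> real) \<Rightarrow> bool" where
  "rot_symmetric p u \<longleftrightarrow> (\<forall>\<theta> z. z \<in> hdisk \<longrightarrow> u (hrot p \<theta> z) = u z)"

end

theory Submission
  imports Defs
begin

text \<open>
  We look for a graph u invariant under the rotations about the vertical axis through the
  centre of the disk. In geodesic polar coordinates (r, theta) let phi(r) = u_r / W be the sine
  of the angle between the graph and the horizontal. The field phi d_r has hyperbolic divergence
  (sinh r phi)' / sinh r, so the soliton equation H = 1/W = sqrt (1 - phi^2) becomes
  (sinh r phi)' = 2 sinh r sqrt (1 - phi^2) with phi(0) = 0, that is, the fixed point equation
  phi(r) = (1 / sinh r) * integral from 0 to r of 2 sinh t sqrt (1 - phi(t)^2) dt.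

  Truncating phi at 12/13 makes the integrand Lipschitz, and the integral operator becomes a
  contraction for the weighted norm sup exp (-10 r) |phi(r)|, so Banach's fixed point theorem
  gives a global solution. Since 2 sqrt (1 - (12/13)^2) = 10/13 < 12/13, the solution never
  climbs above 12/13: the truncation is inactive and |phi| < 1. Integrating
  phi / sqrt (1 - phi^2) along the radius gives u. In the disk coordinate rho = tanh (r/2) all
  radial coefficients are continuous on [0, 1) with derivatives that are o(1/rho) at the origin,
  and this is what makes the graph C^2 across the axis.
\<close>

lemma integral_exp_mult:
  fixes k :: real
  assumes "k \<noteq> 0" "a \<le> b"
  shows "integral {a..b} (\<lambda>t. exp (k * t)) = (exp (k * b) - exp (k * a)) / k"
proof -
  have "((\<lambda>t. exp (k * t)) has_integral (exp (k * b) / k - exp (k * a) / k)) {a..b}"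
    using assms
    by (intro fundamental_theorem_of_calculus)
       (auto intro!: derivative_eq_intros simp: has_real_derivative_iff_has_vector_derivative[symmetric])
  then show ?thesis by (simp add: integral_unique diff_divide_distrib)
qed

lemma integral_sinh:
  fixes a b :: real
  shows "a \<le> b \<Longrightarrow> integral {a..b} sinh = cosh b - cosh a"
  by (intro integral_unique fundamental_theorem_of_calculus[where f = cosh])
     (auto intro!: derivative_eq_intros simp: has_real_derivative_iff_has_vector_derivative[symmetric])

lemma integral_has_real_derivative_atLeastLessThan:
  fixes g :: "real \<Rightarrow> real"
  assumes "continuous_on {a..<b} g" "t \<in> {a..<b}"
  shows "((\<lambda>x. integral {a..x} g) has_real_derivative g t) (at t within {a..<b})"
proof -
  let ?c = "(t + b) / 2"
  have "((\<lambda>x. integral {a..x} g) has_real_derivative g t) (at t within {a..?c})"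
    using assms by (intro integral_has_real_derivative continuous_on_subset[OF assms(1)]) auto
  moreover have "at t within {a..?c} = at t within {a..<b}"
    using assms by (intro at_within_nhd[where S = "{..<?c}"]) auto
  ultimately show ?thesis by simp
qed

lemma has_real_derivative_inverse_sqrt_one_minus_sq:
  fixes x :: real
  assumes "x\<^sup>2 < 1"
  shows "((\<lambda>x. inverse (sqrt (1 - x\<^sup>2))) has_real_derivative x / ((1 - x\<^sup>2) * sqrt (1 - x\<^sup>2))) (at x)"
proof -
  let ?s = "sqrt (1 - x\<^sup>2)"
  have "0 < 1 - x\<^sup>2" using assms by simp
  then have "0 < ?s" "?s\<^sup>2 = 1 - x\<^sup>2" by simp_all
  have "((\<lambda>x. sqrt (1 - x\<^sup>2)) has_real_derivative inverse ?s / 2 * (- 2 * x)) (at x)"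
    using \<open>0 < 1 - x\<^sup>2\<close> by (intro DERIV_chain2[OF DERIV_real_sqrt]) (auto intro!: derivative_eq_intros)
  then have d: "((\<lambda>x. inverse (sqrt (1 - x\<^sup>2))) has_real_derivative
      - (inverse ?s / 2 * (- 2 * x) * inverse (?s ^ Suc (Suc 0)))) (at x)"
    by (rule DERIV_inverse_fun) (use \<open>0 < ?s\<close> in simp)
  have "- (inverse s / 2 * (- 2 * x) * inverse (s ^ Suc (Suc 0))) = x / (s\<^sup>2 * s)"
    if "0 < s" for s :: real
    using that by (simp add: field_simps power2_eq_square)
  from this[OF \<open>0 < ?s\<close>]
  have "- (inverse ?s / 2 * (- 2 * x) * inverse (?s ^ Suc (Suc 0))) = x / ((1 - x\<^sup>2) * ?s)"
    unfolding \<open>?s\<^sup>2 = 1 - x\<^sup>2\<close> .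
  with d show ?thesis
    by (rule DERIV_cong)
qed

lemma exp_2_artanh:
  fixes \<rho> :: real
  shows "\<bar>\<rho>\<bar> < 1 \<Longrightarrow> exp (2 * artanh \<rho>) = (1 + \<rho>) / (1 - \<rho>)"
  by (simp add: artanh_def exp_ln)

lemma sinh_2_artanh:
  fixes \<rho> :: real
  assumes "\<bar>\<rho>\<bar> < 1"
  shows "sinh (2 * artanh \<rho>) = 2 * \<rho> / (1 - \<rho>\<^sup>2)"
proof -
  have "0 < 1 - \<rho>" "0 < 1 + \<rho>" "0 < 1 - \<rho> * \<rho>"
    using assms abs_square_less_1[of \<rho>] by (auto simp: power2_eq_square)
  then show ?thesis
    unfolding sinh_field_def exp_minus exp_2_artanh[OF assms]
    by (simp add: field_simps power2_eq_square)
qed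

lemma cosh_2_artanh:
  fixes \<rho> :: real
  assumes "\<bar>\<rho>\<bar> < 1"
  shows "cosh (2 * artanh \<rho>) = (1 + \<rho>\<^sup>2) / (1 - \<rho>\<^sup>2)"
proof -
  have "0 < 1 - \<rho>" "0 < 1 + \<rho>" "0 < 1 - \<rho> * \<rho>"
    using assms abs_square_less_1[of \<rho>] by (auto simp: power2_eq_square)
  then show ?thesis
    unfolding cosh_field_def exp_minus exp_2_artanh[OF assms]
    by (simp add: field_simps power2_eq_square)
qed

lemma artanh_nonneg:
  fixes \<rho> :: real
  shows "0 \<le> \<rho> \<Longrightarrow> \<rho> < 1 \<Longrightarrow> 0 \<le> artanh \<rho>"
  by (simp add: artanh_def)

lemma sq_less_1:
  fixes \<rho> :: real
  shows "0 \<le> \<rho> \<Longrightarrow> \<rho> < 1 \<Longrightarrow> \<rho>\<^sup>2 < 1"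
  using abs_square_less_1[of \<rho>] by simp

section \<open>Continuously differentiable radial fields on the unit ball\<close>

text \<open>
  The condition on \<open>\<lambda>\<rho>. \<rho> * g' \<rho>\<close> includes continuity at 0, where its value is 0 whatever
  \<open>g' 0\<close> is; so it asks for \<open>g' \<rho> = o(1/\<rho>)\<close> at the origin, which is what makes
  \<open>w \<mapsto> g |w| w\<close> continuously differentiable at the centre of the ball.
\<close>

definition radially_C1 :: "(real \<Rightarrow> real) \<Rightarrow> bool" where
  "radially_C1 g \<longleftrightarrow> continuous_on {0..<1} g \<and>
     (\<exists>g'. (\<forall>\<rho>\<in>{0<..<1}. (g has_real_derivative g' \<rho>) (at \<rho>)) \<and>
           continuous_on {0..<1} (\<lambda>\<rho>. \<rho> * g' \<rho>))"

lemma radially_C1I: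
  assumes "continuous_on {0..<1} g"
    and "\<And>\<rho>. 0 < \<rho> \<Longrightarrow> \<rho> < 1 \<Longrightarrow> (g has_real_derivative g' \<rho>) (at \<rho>)"
    and "continuous_on {0..<1} (\<lambda>\<rho>. \<rho> * g' \<rho>)"
  shows "radially_C1 g"
  unfolding radially_C1_def using assms by (intro conjI exI[of _ g']) auto

lemma radially_C1E:
  assumes "radially_C1 g"
  obtains g' where "continuous_on {0..<1} g"
    and "\<And>\<rho>. 0 < \<rho> \<Longrightarrow> \<rho> < 1 \<Longrightarrow> (g has_real_derivative g' \<rho>) (at \<rho>)"
    and "continuous_on {0..<1} (\<lambda>\<rho>. \<rho> * g' \<rho>)"
proof -
  from assms obtain g' where "\<forall>\<rho>\<in>{0<..<1}. (g has_real_derivative g' \<rho>) (at \<rho>)"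
    and "continuous_on {0..<1} (\<lambda>\<rho>. \<rho> * g' \<rho>)"
    unfolding radially_C1_def by blast
  with assms show thesis
    by (intro that[of g']) (auto simp: radially_C1_def)
qed

lemma radially_C1_mult:
  assumes "radially_C1 g" "radially_C1 h"
  shows "radially_C1 (\<lambda>\<rho>. g \<rho> * h \<rho>)"
proof -
  obtain g' where g: "continuous_on {0..<1} g"
    "\<And>\<rho>. 0 < \<rho> \<Longrightarrow> \<rho> < 1 \<Longrightarrow> (g has_real_derivative g' \<rho>) (at \<rho>)"
    "continuous_on {0..<1} (\<lambda>\<rho>. \<rho> * g' \<rho>)"
    using radially_C1E[OF assms(1)] by blast
  obtain h' where h: "continuous_on {0..<1} h"
    "\<And>\<rho>. 0 < \<rho> \<Longrightarrow> \<rho> < 1 \<Longrightarrow> (h has_real_derivative h' \<rho>) (at \<rho>)"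
    "continuous_on {0..<1} (\<lambda>\<rho>. \<rho> * h' \<rho>)"
    using radially_C1E[OF assms(2)] by blast
  show ?thesis
  proof (rule radially_C1I[where g' = "\<lambda>\<rho>. g' \<rho> * h \<rho> + g \<rho> * h' \<rho>"])
    show "continuous_on {0..<1} (\<lambda>\<rho>. g \<rho> * h \<rho>)"
      by (rule continuous_on_mult[OF g(1) h(1)])
    show "((\<lambda>\<rho>. g \<rho> * h \<rho>) has_real_derivative g' \<rho> * h \<rho> + g \<rho> * h' \<rho>) (at \<rho>)"
      if "0 < \<rho>" "\<rho> < 1" for \<rho>
      by (rule DERIV_cong[OF DERIV_mult[OF g(2)[OF that] h(2)[OF that]]]) (simp add: mult.commute)
    have "continuous_on {0..<1} (\<lambda>\<rho>. \<rho> * g' \<rho> * h \<rho> + g \<rho> * (\<rho> * h' \<rho>))"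
      by (intro continuous_on_add continuous_on_mult[OF g(3) h(1)] continuous_on_mult[OF g(1) h(3)])
    then show "continuous_on {0..<1} (\<lambda>\<rho>. \<rho> * (g' \<rho> * h \<rho> + g \<rho> * h' \<rho>))"
      by (simp add: algebra_simps)
  qed
qed

lemma radially_C1_compose:
  assumes "radially_C1 g" "open U" "g ` {0..<1} \<subseteq> U"
    and f: "\<And>x. x \<in> U \<Longrightarrow> (f has_real_derivative f' x) (at x)" and "continuous_on U f'"
  shows "radially_C1 (\<lambda>\<rho>. f (g \<rho>))"
proof -
  obtain g' where g: "continuous_on {0..<1} g"
    "\<And>\<rho>. 0 < \<rho> \<Longrightarrow> \<rho> < 1 \<Longrightarrow> (g has_real_derivative g' \<rho>) (at \<rho>)"
    "continuous_on {0..<1} (\<lambda>\<rho>. \<rho> * g' \<rho>)"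
    using radially_C1E[OF assms(1)] by blast
  have "continuous_on U f"
    using f by (intro continuous_at_imp_continuous_on ballI DERIV_isCont) auto
  show ?thesis
  proof (rule radially_C1I[where g' = "\<lambda>\<rho>. f' (g \<rho>) * g' \<rho>"])
    show "continuous_on {0..<1} (\<lambda>\<rho>. f (g \<rho>))"
      by (rule continuous_on_compose2[OF \<open>continuous_on U f\<close> g(1) assms(3)])
    show "((\<lambda>\<rho>. f (g \<rho>)) has_real_derivative f' (g \<rho>) * g' \<rho>) (at \<rho>)"
      if "0 < \<rho>" "\<rho> < 1" for \<rho>
      using that assms(3) by (intro DERIV_chain2[OF f g(2)]) auto
    have "continuous_on {0..<1} (\<lambda>\<rho>. f' (g \<rho>) * (\<rho> * g' \<rho>))"
      by (rule continuous_on_mult[OF continuous_on_compose2[OF assms(5) g(1) assms(3)] g(3)])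
    then show "continuous_on {0..<1} (\<lambda>\<rho>. \<rho> * (f' (g \<rho>) * g' \<rho>))"
      by (simp add: mult_ac)
  qed
qed

lemma continuous_on_radial:
  fixes g :: "real \<Rightarrow> 'b::topological_space"
  assumes "continuous_on {0..<1} g"
  shows "continuous_on (ball 0 1) (\<lambda>w::'a::real_normed_vector. g (norm w))"
  by (rule continuous_on_compose2[OF assms continuous_on_norm_id]) auto

lemma has_derivative_radial_field:
  fixes z :: "'a::real_inner"
  assumes g: "continuous_on {0..<1} g"
    and g': "\<And>\<rho>. 0 < \<rho> \<Longrightarrow> \<rho> < 1 \<Longrightarrow> (g has_real_derivative g' \<rho>) (at \<rho>)"
    and z: "norm z < 1"
  shows "((\<lambda>w. g (norm w) *\<^sub>R w) has_derivative
          (\<lambda>v. g (norm z) *\<^sub>R v + (g' (norm z) * (z \<bullet> v) / norm z) *\<^sub>R z)) (at z)"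
proof (cases "z = 0")
  case False
  have "0 < norm z" using False by simp
  have "((\<lambda>w. g (norm w)) has_derivative (\<lambda>v. g' (norm z) * (v \<bullet> sgn z))) (at z)"
    using has_derivative_compose[OF has_derivative_norm[OF False]
        g'[OF \<open>0 < norm z\<close> z, unfolded has_field_derivative_def]]
    by (simp add: mult.commute)
  then have "((\<lambda>w. g (norm w) *\<^sub>R w) has_derivative
      (\<lambda>v. g (norm z) *\<^sub>R v + (g' (norm z) * (v \<bullet> sgn z)) *\<^sub>R z)) (at z)"
    by (rule has_derivative_scaleR[OF _ has_derivative_ident])
  moreover have "v \<bullet> sgn z = (z \<bullet> v) / norm z" for v
    by (simp add: sgn_div_norm inner_commute divide_inverse mult.commute)
  ultimately show ?thesis by simp
next
  case True
  have "isCont (\<lambda>w::'a. g (norm w)) 0"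
    by (rule continuous_on_interior[OF continuous_on_radial[OF g]]) simp
  then have "((\<lambda>h::'a. \<bar>g (norm h) - g 0\<bar>) \<longlongrightarrow> 0) (at 0)"
    unfolding isCont_def by (intro tendsto_rabs_zero) (simp add: LIM_zero)
  then have "((\<lambda>h. norm (g (norm (0 + h)) *\<^sub>R (0 + h) - g (norm 0) *\<^sub>R 0 - g 0 *\<^sub>R h) / norm h)
               \<longlongrightarrow> 0) (at (0::'a))"
  proof (rule Lim_transform_eventually)
    show "\<forall>\<^sub>F h in at 0. \<bar>g (norm h) - g 0\<bar>
            = norm (g (norm (0 + h)) *\<^sub>R (0 + h) - g (norm 0) *\<^sub>R 0 - g 0 *\<^sub>R h) / norm h"
      unfolding eventually_at_filter
      by (intro always_eventually allI impI) (simp add: scaleR_diff_left[symmetric])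
  qed
  then have "((\<lambda>w::'a. g (norm w) *\<^sub>R w) has_derivative (\<lambda>v. g 0 *\<^sub>R v)) (at 0)"
    by (simp add: has_derivative_at bounded_linear_scaleR_right)
  then show ?thesis using True by simp
qed

lemma continuous_on_radial_field_derivative:
  fixes v :: "'a::real_inner"
  assumes g: "continuous_on {0..<1} g" and q: "continuous_on {0..<1} (\<lambda>\<rho>. \<rho> * g' \<rho>)"
  shows "continuous_on (ball 0 1) (\<lambda>z. g (norm z) *\<^sub>R v + (g' (norm z) * (z \<bullet> v) / norm z) *\<^sub>R z)"
proof -
  define q' where "q' z = norm z * g' (norm z)" for z :: 'a
  define T where "T z = (q' z * (z \<bullet> v) / (norm z)\<^sup>2) *\<^sub>R z" for z :: 'a
  have T_eq: "(g' (norm z) * (z \<bullet> v) / norm z) *\<^sub>R z = T z" for z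
    by (cases "z = 0") (simp_all add: T_def q'_def power2_eq_square)
  have q': "continuous_on (ball 0 1) q'"
    unfolding q'_def by (rule continuous_on_radial[OF q])
  have "continuous_on (ball 0 1 - {0}) T"
    unfolding T_def
    by (intro continuous_on_scaleR continuous_on_divide continuous_on_mult continuous_on_id
        continuous_on_inner continuous_on_const continuous_on_power continuous_on_norm
        continuous_on_subset[OF q']) auto
  then have T_away: "isCont T z" if "z \<in> ball 0 1" "z \<noteq> 0" for z
    using that by (intro continuous_on_interior[of "ball 0 1 - {0}"]) (auto simp: interior_open open_Diff)
  have "(q' \<longlongrightarrow> 0) (at 0)"
    using continuous_on_interior[OF q', of 0] by (simp add: isCont_def q'_def)
  then have lim: "((\<lambda>z. \<bar>q' z\<bar> * norm v) \<longlongrightarrow> 0) (at 0)"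
    by (intro tendsto_mult_left_zero tendsto_rabs_zero)
  have bound: "norm (T z) \<le> \<bar>q' z\<bar> * norm v" for z
  proof (cases "z = 0")
    case False
    have "norm (T z) = \<bar>q' z\<bar> * \<bar>z \<bullet> v\<bar> / norm z"
      using False by (simp add: T_def abs_mult power2_eq_square)
    also have "\<dots> \<le> \<bar>q' z\<bar> * (norm z * norm v) / norm z"
      by (intro divide_right_mono mult_left_mono Cauchy_Schwarz_ineq2) auto
    finally show ?thesis using False by simp
  qed (simp add: T_def)
  have "(T \<longlongrightarrow> 0) (at 0)"
    by (rule Lim_null_comparison[OF always_eventually lim]) (use bound in blast)
  moreover have "T 0 = 0" by (simp add: T_def)
  ultimately have "isCont T 0" unfolding isCont_def by simp
  with T_away have "continuous_on (ball 0 1) T"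
    by (metis continuous_at_imp_continuous_on)
  with continuous_on_radial[OF g] show ?thesis
    unfolding T_eq by (intro continuous_on_add continuous_on_scaleR continuous_on_const)
qed

lemma radially_C1_field:
  fixes v :: "'a::real_inner"
  assumes "radially_C1 g"
  shows "\<And>z. z \<in> ball 0 1 \<Longrightarrow> (\<lambda>w::'a. g (norm w) *\<^sub>R w) differentiable (at z)"
    and "continuous_on (ball 0 1) (\<lambda>z. frechet_derivative (\<lambda>w::'a. g (norm w) *\<^sub>R w) (at z) v)"
proof -
  obtain g' where g: "continuous_on {0..<1} g"
    "\<And>\<rho>. 0 < \<rho> \<Longrightarrow> \<rho> < 1 \<Longrightarrow> (g has_real_derivative g' \<rho>) (at \<rho>)"
    "continuous_on {0..<1} (\<lambda>\<rho>. \<rho> * g' \<rho>)"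
    using radially_C1E[OF assms] by blast
  note deriv = has_derivative_radial_field[OF g(1,2)]
  show "(\<lambda>w::'a. g (norm w) *\<^sub>R w) differentiable (at z)" if "z \<in> ball 0 1" for z
    using deriv[of z] that by (auto intro: differentiableI)
  show "continuous_on (ball 0 1) (\<lambda>z. frechet_derivative (\<lambda>w::'a. g (norm w) *\<^sub>R w) (at z) v)"
  proof (rule continuous_on_eq[OF continuous_on_radial_field_derivative[OF g(1,3)]])
    fix z :: 'a assume "z \<in> ball 0 1"
    then show "g (norm z) *\<^sub>R v + (g' (norm z) * (z \<bullet> v) / norm z) *\<^sub>R z
                 = frechet_derivative (\<lambda>w. g (norm w) *\<^sub>R w) (at z) v"
      using fun_cong[OF frechet_derivative_at[OF deriv[of z]], of v] by simp
  qed
qed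

lemma radial_field_divergence:
  fixes z :: complex
  shows "Re (a *\<^sub>R 1 + (b * (z \<bullet> 1) / cmod z) *\<^sub>R z) + Im (a *\<^sub>R \<i> + (b * (z \<bullet> \<i>) / cmod z) *\<^sub>R z)
           = 2 * a + b * cmod z"
proof (cases "z = 0")
  case False
  have "Re (a *\<^sub>R 1 + (b * (z \<bullet> 1) / cmod z) *\<^sub>R z) + Im (a *\<^sub>R \<i> + (b * (z \<bullet> \<i>) / cmod z) *\<^sub>R z)
          = 2 * a + b * ((Re z)\<^sup>2 + (Im z)\<^sup>2) / cmod z"
    by (simp add: inner_complex_def power2_eq_square add_divide_distrib algebra_simps)
  also have "\<dots> = 2 * a + b * (cmod z)\<^sup>2 / cmod z"
    by (simp only: cmod_power2)
  also have "\<dots> = 2 * a + b * cmod z"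
    using False by (simp add: power2_eq_square)
  finally show ?thesis .
qed simp

lemma ediv_radial_field:
  assumes "continuous_on {0..<1} g"
    and "\<And>\<rho>. 0 < \<rho> \<Longrightarrow> \<rho> < 1 \<Longrightarrow> (g has_real_derivative g' \<rho>) (at \<rho>)"
    and "cmod z < 1"
  shows "ediv (\<lambda>w. g (cmod w) *\<^sub>R w) z = 2 * g (cmod z) + g' (cmod z) * cmod z"
proof -
  have "frechet_derivative (\<lambda>w. g (cmod w) *\<^sub>R w) (at z)
          = (\<lambda>v. g (cmod z) *\<^sub>R v + (g' (cmod z) * (z \<bullet> v) / cmod z) *\<^sub>R z)"
    using frechet_derivative_at[OF has_derivative_radial_field[OF assms]] by simp
  then show ?thesis
    unfolding ediv_def by (simp only: radial_field_divergence)
qed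

section \<open>The rotational soliton equation in geodesic polar coordinates\<close>

definition saturate :: "real \<Rightarrow> real" where
  "saturate x = max (-(12/13)) (min (12/13) x)"

definition trunc_cos :: "real \<Rightarrow> real" where
  "trunc_cos x = sqrt (1 - (saturate x)\<^sup>2)"

lemma abs_saturate_le: "\<bar>saturate x\<bar> \<le> 12/13"
  unfolding saturate_def by auto

lemma saturate_sq_le: "(saturate x)\<^sup>2 \<le> (12/13)\<^sup>2"
  using power_mono[OF abs_saturate_le[of x], of 2] by simp

lemma saturate_lipschitz: "\<bar>saturate x - saturate y\<bar> \<le> \<bar>x - y\<bar>"
  unfolding saturate_def by auto

lemma trunc_cos_eq: "\<bar>x\<bar> \<le> 12/13 \<Longrightarrow> trunc_cos x = sqrt (1 - x\<^sup>2)"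
  unfolding trunc_cos_def saturate_def by (simp add: abs_le_iff)

lemma trunc_cos_top: "12/13 \<le> x \<Longrightarrow> trunc_cos x = 5/13"
proof -
  assume "12/13 \<le> x"
  then have "trunc_cos x = sqrt ((5/13)\<^sup>2)"
    by (simp add: trunc_cos_def saturate_def power2_eq_square)
  then show ?thesis by simp
qed

lemma trunc_cos_ge: "5/13 \<le> trunc_cos x"
proof -
  have "(5/13)\<^sup>2 \<le> 1 - (saturate x)\<^sup>2"
    using saturate_sq_le[of x] by (simp add: power2_eq_square)
  then show ?thesis unfolding trunc_cos_def by (rule real_le_rsqrt)
qed

lemma trunc_cos_le_1: "trunc_cos x \<le> 1"
  unfolding trunc_cos_def by simp

lemma trunc_cos_lipschitz: "\<bar>trunc_cos x - trunc_cos y\<bar> \<le> 12/5 * \<bar>x - y\<bar>"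
proof -
  let ?a = "1 - (saturate x)\<^sup>2" and ?b = "1 - (saturate y)\<^sup>2"
  have nonneg: "0 \<le> ?a" "0 \<le> ?b"
    using saturate_sq_le[of x] saturate_sq_le[of y] by (simp_all add: power2_eq_square)
  have sqrt_ge: "5/13 \<le> sqrt ?a" "5/13 \<le> sqrt ?b"
    using trunc_cos_ge[of x] trunc_cos_ge[of y] by (simp_all add: trunc_cos_def)
  have "(sqrt ?a - sqrt ?b) * (sqrt ?a + sqrt ?b) = ?a - ?b"
    using nonneg by (simp add: algebra_simps)
  then have "\<bar>sqrt ?a - sqrt ?b\<bar> * (sqrt ?a + sqrt ?b) = \<bar>?a - ?b\<bar>"
    by (metis abs_mult abs_of_nonneg add_nonneg_nonneg real_sqrt_ge_zero nonneg)
  also have "\<dots> = \<bar>saturate y - saturate x\<bar> * \<bar>saturate y + saturate x\<bar>"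
    by (simp add: power2_eq_square abs_mult[symmetric] algebra_simps)
  also have "\<dots> \<le> \<bar>x - y\<bar> * (24/13)"
  proof (rule mult_mono)
    show "\<bar>saturate y + saturate x\<bar> \<le> 24/13"
      using abs_triangle_ineq[of "saturate y" "saturate x"] abs_saturate_le[of x] abs_saturate_le[of y]
      by linarith
  qed (use saturate_lipschitz[of y x] in \<open>auto simp: abs_minus_commute\<close>)
  finally have "\<bar>sqrt ?a - sqrt ?b\<bar> * (sqrt ?a + sqrt ?b) \<le> \<bar>x - y\<bar> * (24/13)" .
  moreover have "\<bar>sqrt ?a - sqrt ?b\<bar> * (10/13) \<le> \<bar>sqrt ?a - sqrt ?b\<bar> * (sqrt ?a + sqrt ?b)"
    using sqrt_ge by (intro mult_left_mono) auto
  ultimately have "\<bar>sqrt ?a - sqrt ?b\<bar> * (10/13) \<le> \<bar>x - y\<bar> * (24/13)"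
    by linarith
  then show ?thesis unfolding trunc_cos_def by (simp add: field_simps)
qed

lemma continuous_on_trunc_cos [continuous_intros]:
  "continuous_on A f \<Longrightarrow> continuous_on A (\<lambda>x. trunc_cos (f x))"
  unfolding trunc_cos_def saturate_def by (intro continuous_intros)

definition soliton_rhs :: "(real \<Rightarrow> real) \<Rightarrow> real \<Rightarrow> real" where
  "soliton_rhs \<phi> t = 2 * sinh t * trunc_cos (\<phi> t)"

definition soliton_op :: "(real \<Rightarrow> real) \<Rightarrow> real \<Rightarrow> real" where
  "soliton_op \<phi> r = (if r \<le> 0 then 0 else integral {0..r} (soliton_rhs \<phi>) / sinh r)"

context
  fixes \<phi> :: "real \<Rightarrow> real"
  assumes cont: "continuous_on UNIV \<phi>"
begin

lemma continuous_on_soliton_rhs: "continuous_on A (soliton_rhs \<phi>)"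
  unfolding soliton_rhs_def
  by (intro continuous_intros continuous_on_subset[OF cont]) auto

lemma soliton_rhs_integrable: "soliton_rhs \<phi> integrable_on {a..b}"
  by (intro integrable_continuous_interval continuous_on_soliton_rhs)

lemma integral_soliton_rhs_has_derivative:
  assumes "0 < r"
  shows "((\<lambda>s. integral {0..s} (soliton_rhs \<phi>)) has_real_derivative soliton_rhs \<phi> r) (at r)"
proof -
  have "((\<lambda>s. integral {0..s} (soliton_rhs \<phi>)) has_real_derivative soliton_rhs \<phi> r)
          (at r within {0..r+1})"
    using assms by (intro integral_has_real_derivative continuous_on_soliton_rhs) auto
  moreover have "at r within {0..r+1} = at r"
    using assms by (intro at_within_interior) auto
  ultimately show ?thesis by simp
qed

lemma soliton_op_bounds: "0 \<le> soliton_op \<phi> r \<and> soliton_op \<phi> r \<le> 2 * max 0 r"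
proof (cases "r \<le> 0")
  case False
  then have r: "0 < r" "0 < sinh r" by simp_all
  have "0 \<le> integral {0..r} (soliton_rhs \<phi>)"
    by (intro integral_nonneg soliton_rhs_integrable)
      (auto simp: soliton_rhs_def intro!: mult_nonneg_nonneg order.trans[OF _ trunc_cos_ge])
  moreover have "integral {0..r} (soliton_rhs \<phi>) \<le> integral {0..r} (\<lambda>_. 2 * sinh r)"
  proof (intro integral_le soliton_rhs_integrable)
    fix t assume t: "t \<in> {0..r}"
    have "2 * sinh t * trunc_cos (\<phi> t) \<le> 2 * sinh t * 1"
      using t trunc_cos_le_1 by (intro mult_left_mono) auto
    also have "\<dots> \<le> 2 * sinh r" using t by simp
    finally show "soliton_rhs \<phi> t \<le> 2 * sinh r" by (simp add: soliton_rhs_def)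
  qed auto
  ultimately show ?thesis
    using r by (auto simp: soliton_op_def divide_simps)
qed (simp add: soliton_op_def)

lemma continuous_on_soliton_op: "continuous_on {0..} (soliton_op \<phi>)"
  unfolding continuous_on_eq_continuous_within
proof
  fix x :: real assume "x \<in> {0..}"
  show "continuous (at x within {0..}) (soliton_op \<phi>)"
  proof (cases "x = 0")
    case True
    have "(soliton_op \<phi> \<longlongrightarrow> 0) (at 0 within {0..})"
    proof (rule tendsto_sandwich[of "\<lambda>_. 0" _ _ "\<lambda>r. 2 * r"])
      show "\<forall>\<^sub>F r in at 0 within {0..}. 0 \<le> soliton_op \<phi> r"
        using soliton_op_bounds by simp
      show "\<forall>\<^sub>F r in at 0 within {0..}. soliton_op \<phi> r \<le> 2 * r"
        unfolding eventually_at_filter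
      proof (intro always_eventually allI impI)
        fix r :: real assume "r \<in> {0..}"
        then show "soliton_op \<phi> r \<le> 2 * r" using soliton_op_bounds[of r] by simp
      qed
    qed (auto intro!: tendsto_eq_intros)
    then show ?thesis
      using True by (simp add: continuous_within soliton_op_def)
  next
    case False
    with \<open>x \<in> {0..}\<close> have "0 < x" by simp
    have "isCont (\<lambda>r. integral {0..r} (soliton_rhs \<phi>) / sinh r) x"
      using \<open>0 < x\<close> DERIV_isCont[OF integral_soliton_rhs_has_derivative]
      by (intro continuous_intros) auto
    moreover have eq: "\<forall>\<^sub>F r in nhds x. integral {0..r} (soliton_rhs \<phi>) / sinh r = soliton_op \<phi> r"
      using eventually_gt_at_top \<open>0 < x\<close>
      by (auto simp: soliton_op_def eventually_nhds intro!: exI[of _ "{0<..}"])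
    ultimately have "isCont (soliton_op \<phi>) x"
      using isCont_cong[OF eq] by simp
    then show ?thesis
      by (rule continuous_at_imp_continuous_within)
  qed
qed

end

lemma soliton_op_weighted_lipschitz:
  assumes cont: "continuous_on UNIV \<phi>\<^sub>1" "continuous_on UNIV \<phi>\<^sub>2"
    and "0 \<le> d"
    and close: "\<And>t. t \<in> {0..r} \<Longrightarrow> \<bar>\<phi>\<^sub>1 t - \<phi>\<^sub>2 t\<bar> \<le> d * exp (10 * t)"
  shows "\<bar>soliton_op \<phi>\<^sub>1 r - soliton_op \<phi>\<^sub>2 r\<bar> \<le> 12/25 * d * exp (10 * r)"
proof (cases "r \<le> 0")
  case True
  then show ?thesis using \<open>0 \<le> d\<close> by (simp add: soliton_op_def)
next
  case False
  then have r: "0 < r" "0 < sinh r" by simp_all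
  have "\<bar>soliton_rhs \<phi>\<^sub>1 t - soliton_rhs \<phi>\<^sub>2 t\<bar> \<le> (24/5 * sinh r * d) * exp (10 * t)"
    if t: "t \<in> {0..r}" for t
  proof -
    have sinh_t: "0 \<le> sinh t" "sinh t \<le> sinh r" using t by auto
    have "\<bar>soliton_rhs \<phi>\<^sub>1 t - soliton_rhs \<phi>\<^sub>2 t\<bar> = 2 * sinh t * \<bar>trunc_cos (\<phi>\<^sub>1 t) - trunc_cos (\<phi>\<^sub>2 t)\<bar>"
      using sinh_t by (simp add: soliton_rhs_def abs_mult right_diff_distrib[symmetric])
    also have "\<dots> \<le> 2 * sinh r * (12/5 * (d * exp (10 * t)))"
      using sinh_t trunc_cos_lipschitz[of "\<phi>\<^sub>1 t" "\<phi>\<^sub>2 t"] close[OF t] \<open>0 \<le> d\<close>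
      by (intro mult_mono) auto
    finally show ?thesis by simp
  qed
  then have "norm (integral {0..r} (\<lambda>t. soliton_rhs \<phi>\<^sub>1 t - soliton_rhs \<phi>\<^sub>2 t))
               \<le> integral {0..r} (\<lambda>t. (24/5 * sinh r * d) * exp (10 * t))"
    by (intro integral_norm_bound_integral integrable_diff soliton_rhs_integrable cont
        integrable_continuous_interval continuous_intros) auto
  also have "\<dots> = 24/5 * sinh r * d * ((exp (10 * r) - 1) / 10)"
    using r by (simp add: integral_exp_mult)
  also have "\<dots> \<le> sinh r * (12/25 * d * exp (10 * r))"
    using r \<open>0 \<le> d\<close> by (simp add: field_simps)
  finally have "\<bar>integral {0..r} (soliton_rhs \<phi>\<^sub>1) - integral {0..r} (soliton_rhs \<phi>\<^sub>2)\<bar>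
                  \<le> sinh r * (12/25 * d * exp (10 * r))"
    by (simp add: integral_diff soliton_rhs_integrable cont)
  then show ?thesis
    using r by (simp add: soliton_op_def diff_divide_distrib[symmetric] abs_div pos_divide_le_eq mult.commute)
qed

text \<open>
  Conjugation with the weight \<open>exp (10 * r)\<close> turns \<open>soliton_op\<close> into a contraction of the sup
  norm; for \<open>r < 0\<close> the value at 0 is repeated.
\<close>

definition weighted_op :: "(real \<Rightarrow>\<^sub>C real) \<Rightarrow> (real \<Rightarrow>\<^sub>C real)" where
  "weighted_op \<psi> =
     Bcontfun (\<lambda>r. exp (-10 * max 0 r) * soliton_op (\<lambda>t. exp (10 * t) * \<psi> t) (max 0 r))"

lemma continuous_on_exp_weighted:
  fixes \<psi> :: "real \<Rightarrow>\<^sub>C real"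
  shows "continuous_on UNIV (\<lambda>t. exp (10 * t) * apply_bcontfun \<psi> t)"
  by (intro continuous_intros) auto

lemma weighted_op_apply:
  "weighted_op \<psi> r = exp (-10 * max 0 r) * soliton_op (\<lambda>t. exp (10 * t) * \<psi> t) (max 0 r)"
proof -
  let ?\<phi> = "\<lambda>t. exp (10 * t) * apply_bcontfun \<psi> t"
  have "(\<lambda>r. exp (-10 * max 0 r) * soliton_op ?\<phi> (max 0 r)) \<in> bcontfun"
  proof (rule bcontfun_normI)
    show "continuous_on UNIV (\<lambda>r. exp (-10 * max 0 r) * soliton_op ?\<phi> (max 0 r))"
      by (rule continuous_on_compose2[of "{0..}" "\<lambda>m. exp (-10 * m) * soliton_op ?\<phi> m"])
        (auto intro!: continuous_intros continuous_on_soliton_op continuous_on_exp_weighted)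
    fix r :: real
    let ?m = "max 0 r"
    have "2 * ?m \<le> exp (10 * ?m)"
      using exp_ge_add_one_self[of "10 * ?m"] max.cobounded1[of 0 r] by linarith
    then have "exp (-10 * ?m) * (2 * ?m) \<le> 1"
      by (simp add: exp_minus field_simps)
    moreover have "exp (-10 * ?m) * soliton_op ?\<phi> ?m \<le> exp (-10 * ?m) * (2 * ?m)"
      and "0 \<le> exp (-10 * ?m) * soliton_op ?\<phi> ?m"
      using soliton_op_bounds[OF continuous_on_exp_weighted, of \<psi> ?m] by simp_all
    ultimately show "norm (exp (-10 * ?m) * soliton_op ?\<phi> ?m) \<le> 1"
      by (metis abs_of_nonneg order.trans real_norm_def)
  qed
  then show ?thesis by (simp add: weighted_op_def Bcontfun_inverse)
qed

lemma weighted_op_contraction: "dist (weighted_op \<psi>\<^sub>1) (weighted_op \<psi>\<^sub>2) \<le> 12/25 * dist \<psi>\<^sub>1 \<psi>\<^sub>2"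
proof (rule dist_bound)
  fix r :: real
  let ?m = "max 0 r" and ?d = "dist \<psi>\<^sub>1 \<psi>\<^sub>2"
  have "\<bar>exp (10 * t) * \<psi>\<^sub>1 t - exp (10 * t) * \<psi>\<^sub>2 t\<bar> \<le> ?d * exp (10 * t)" for t
  proof -
    have "\<bar>exp (10 * t) * \<psi>\<^sub>1 t - exp (10 * t) * \<psi>\<^sub>2 t\<bar> = exp (10 * t) * \<bar>\<psi>\<^sub>1 t - \<psi>\<^sub>2 t\<bar>"
      by (simp add: right_diff_distrib[symmetric] abs_mult)
    also have "\<dots> \<le> exp (10 * t) * ?d"
      using dist_bounded[of \<psi>\<^sub>1 t \<psi>\<^sub>2] by (simp add: dist_real_def)
    finally show ?thesis by (simp add: mult.commute)
  qed
  then have "\<bar>soliton_op (\<lambda>t. exp (10 * t) * \<psi>\<^sub>1 t) ?m - soliton_op (\<lambda>t. exp (10 * t) * \<psi>\<^sub>2 t) ?m\<bar>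
               \<le> 12/25 * ?d * exp (10 * ?m)"
    by (intro soliton_op_weighted_lipschitz continuous_on_exp_weighted) auto
  then have "exp (-10 * ?m) * \<bar>soliton_op (\<lambda>t. exp (10 * t) * \<psi>\<^sub>1 t) ?m
                                - soliton_op (\<lambda>t. exp (10 * t) * \<psi>\<^sub>2 t) ?m\<bar> \<le> 12/25 * ?d"
    by (simp add: exp_minus field_simps)
  then show "dist (weighted_op \<psi>\<^sub>1 r) (weighted_op \<psi>\<^sub>2 r) \<le> 12/25 * ?d"
    by (simp add: weighted_op_apply dist_real_def abs_mult right_diff_distrib[symmetric])
qed

text \<open>The solution \<open>\<phi>\<close>: the sine of the angle between graph and horizontal at geodesic radius r.\<close>

definition tilt :: "real \<Rightarrow> real" where
  "tilt t = exp (10 * t) * (SOME \<psi>. weighted_op \<psi> = \<psi>) t"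

lemma continuous_on_tilt: "continuous_on UNIV tilt"
  unfolding tilt_def by (intro continuous_intros) auto

lemma tilt_fixed_point: "0 \<le> r \<Longrightarrow> tilt r = soliton_op tilt r"
proof -
  assume "0 \<le> r"
  let ?\<psi> = "SOME \<psi>. weighted_op \<psi> = \<psi>"
  have "\<exists>\<psi>. weighted_op \<psi> = \<psi>"
    using banach_fix_type[of "12/25" weighted_op] weighted_op_contraction by auto
  then have "weighted_op ?\<psi> = ?\<psi>"
    by (rule someI_ex)
  moreover have "(\<lambda>t. exp (10 * t) * ?\<psi> t) = tilt"
    by (simp add: tilt_def[abs_def])
  ultimately have "?\<psi> r = exp (-10 * r) * soliton_op tilt r"
    using \<open>0 \<le> r\<close> weighted_op_apply[of ?\<psi> r] by simp
  then show ?thesis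
    by (simp add: tilt_def exp_minus)
qed

lemma tilt_bounds: "0 \<le> r \<Longrightarrow> 0 \<le> tilt r \<and> tilt r \<le> 2 * r"
  using soliton_op_bounds[OF continuous_on_tilt, of r] tilt_fixed_point[of r] by simp

definition flux :: "real \<Rightarrow> real" where
  "flux r = integral {0..r} (soliton_rhs tilt)"

lemma flux_eq: "0 \<le> r \<Longrightarrow> flux r = sinh r * tilt r"
  using tilt_fixed_point[of r] by (cases "r = 0") (auto simp: flux_def soliton_op_def)

lemma flux_has_derivative: "0 < r \<Longrightarrow> (flux has_real_derivative soliton_rhs tilt r) (at r)"
  unfolding flux_def[abs_def] by (rule integral_soliton_rhs_has_derivative[OF continuous_on_tilt])

text \<open>
  While the tilt stays above the truncation level the equation reads
  \<open>(sinh r \<phi>)' = 10/13 sinh r\<close>, and this pushes \<open>\<phi>\<close> back below 12/13.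
\<close>

lemma tilt_stays_below:
  assumes r: "0 \<le> r\<^sub>0" "r\<^sub>0 \<le> r\<^sub>1" and start: "tilt r\<^sub>0 = 12/13"
    and above: "\<And>t. t \<in> {r\<^sub>0..r\<^sub>1} \<Longrightarrow> 12/13 \<le> tilt t"
  shows "tilt r\<^sub>1 \<le> 12/13"
proof (cases "r\<^sub>0 = r\<^sub>1")
  case False
  have "flux r\<^sub>1 = flux r\<^sub>0 + integral {r\<^sub>0..r\<^sub>1} (soliton_rhs tilt)"
    unfolding flux_def using r
    by (intro Henstock_Kurzweil_Integration.integral_combine[symmetric]
        soliton_rhs_integrable continuous_on_tilt) auto
  also have "integral {r\<^sub>0..r\<^sub>1} (soliton_rhs tilt) = integral {r\<^sub>0..r\<^sub>1} (\<lambda>t. 10/13 * sinh t)"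
    using above by (intro integral_cong) (simp add: soliton_rhs_def trunc_cos_top)
  also have "\<dots> = 10/13 * (cosh r\<^sub>1 - cosh r\<^sub>0)"
    using r by (simp add: integral_sinh)
  finally have "sinh r\<^sub>1 * tilt r\<^sub>1 = 12/13 * sinh r\<^sub>0 + 10/13 * (cosh r\<^sub>1 - cosh r\<^sub>0)"
    using r start by (simp add: flux_eq)
  also have "\<dots> \<le> 12/13 * sinh r\<^sub>0 + 12/13 * (sinh r\<^sub>1 - sinh r\<^sub>0)"
  proof -
    have "exp (- r\<^sub>1) \<le> exp (- r\<^sub>0)" using r by simp
    then have "cosh r\<^sub>1 - cosh r\<^sub>0 \<le> sinh r\<^sub>1 - sinh r\<^sub>0"
      using cosh_minus_sinh[of r\<^sub>1] cosh_minus_sinh[of r\<^sub>0] by linarith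
    moreover have "cosh r\<^sub>0 \<le> cosh r\<^sub>1" using r by (simp add: cosh_real_nonneg_le_iff)
    ultimately show ?thesis by (simp add: field_simps)
  qed
  finally have "sinh r\<^sub>1 * tilt r\<^sub>1 \<le> sinh r\<^sub>1 * (12/13)" by (simp add: field_simps)
  moreover have "0 < sinh r\<^sub>1" using r False by simp
  ultimately show ?thesis by simp
qed (use start in simp)

lemma tilt_le: "0 \<le> r \<Longrightarrow> tilt r \<le> 12/13"
proof (rule ccontr)
  assume r: "0 \<le> r" and "\<not> tilt r \<le> 12/13"
  then have big: "12/13 < tilt r" by simp
  define S where "S = {0..r} \<inter> {t. tilt t \<le> 12/13}"
  have "closed S" unfolding S_def
    by (intro closed_Int closed_Collect_le continuous_on_tilt continuous_intros) auto
  moreover have "0 \<in> S" using r tilt_bounds[of 0] by (simp add: S_def)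
  moreover have "bdd_above S" unfolding S_def by (auto intro: bdd_aboveI[of _ r])
  ultimately have "Sup S \<in> S" by (intro closed_contains_Sup) auto
  then have r\<^sub>0: "0 \<le> Sup S" "Sup S \<le> r" "tilt (Sup S) \<le> 12/13" by (auto simp: S_def)
  have after: "12/13 < tilt t" if "Sup S < t" "t \<le> r" for t
  proof (rule ccontr)
    assume "\<not> 12/13 < tilt t"
    then have "t \<in> S" using that r\<^sub>0 by (auto simp: S_def)
    then show False using that cSup_upper[OF _ \<open>bdd_above S\<close>] by force
  qed
  obtain x where x: "Sup S \<le> x" "x \<le> r" "tilt x = 12/13"
    using IVT'[of tilt "Sup S" "12/13" r] r\<^sub>0 big continuous_on_subset[OF continuous_on_tilt]
    by auto
  then have "x = Sup S" using after[of x] by force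
  then have "tilt r \<le> 12/13"
    using x r\<^sub>0 after by (intro tilt_stays_below[of "Sup S"]) (auto simp: le_less)
  with big show False by simp
qed

lemma trunc_cos_tilt: "0 \<le> t \<Longrightarrow> trunc_cos (tilt t) = sqrt (1 - (tilt t)\<^sup>2)"
  using tilt_bounds[of t] tilt_le[of t] by (intro trunc_cos_eq) simp

lemma flux_le: "0 \<le> r \<Longrightarrow> flux r \<le> 2 * (cosh r - 1)"
proof -
  assume r: "0 \<le> r"
  have "flux r \<le> integral {0..r} (\<lambda>t. 2 * sinh t)"
    unfolding flux_def
  proof (intro integral_le soliton_rhs_integrable continuous_on_tilt)
    fix t assume "t \<in> {0..r}"
    then show "soliton_rhs tilt t \<le> 2 * sinh t"
      using trunc_cos_le_1[of "tilt t"] by (simp add: soliton_rhs_def mult_left_le)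
  qed (intro integrable_continuous_interval continuous_intros)
  also have "\<dots> = 2 * (cosh r - 1)"
    using r by (simp add: integral_sinh)
  finally show ?thesis .
qed

lemma flux_ge: "0 \<le> r \<Longrightarrow> 2 * (1 - 4 * r\<^sup>2) * (cosh r - 1) \<le> flux r"
proof -
  assume r: "0 \<le> r"
  have "2 * (1 - 4 * r\<^sup>2) * (cosh r - 1) = integral {0..r} (\<lambda>t. 2 * (1 - 4 * r\<^sup>2) * sinh t)"
    using r by (simp add: integral_sinh)
  also have "\<dots> \<le> flux r"
    unfolding flux_def
  proof (intro integral_le soliton_rhs_integrable continuous_on_tilt)
    fix t assume t: "t \<in> {0..r}"
    have "(tilt t)\<^sup>2 \<le> (2 * r)\<^sup>2"
      using t tilt_bounds[of t] by (intro power_mono) auto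
    moreover have "(tilt t)\<^sup>2 \<le> 1"
      using t tilt_bounds[of t] tilt_le[of t] by (simp add: abs_square_le_1)
    moreover have "(1 - (tilt t)\<^sup>2)\<^sup>2 \<le> 1 - (tilt t)\<^sup>2"
      using \<open>(tilt t)\<^sup>2 \<le> 1\<close> by (simp add: power2_eq_square mult_left_le)
    then have "1 - (tilt t)\<^sup>2 \<le> sqrt (1 - (tilt t)\<^sup>2)"
      by (rule real_le_rsqrt)
    ultimately have "1 - 4 * r\<^sup>2 \<le> sqrt (1 - (tilt t)\<^sup>2)"
      by (simp add: power_mult_distrib)
    then have "2 * sinh t * (1 - 4 * r\<^sup>2) \<le> 2 * sinh t * sqrt (1 - (tilt t)\<^sup>2)"
      using t by (intro mult_left_mono) auto
    then show "2 * (1 - 4 * r\<^sup>2) * sinh t \<le> soliton_rhs tilt t"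
      using t by (simp add: soliton_rhs_def trunc_cos_tilt mult_ac)
  qed (intro integrable_continuous_interval continuous_intros)
  finally show ?thesis .
qed

section \<open>The profile in the disk coordinate\<close>

text \<open>
  \<open>2 * artanh \<rho>\<close> is the hyperbolic distance from the centre to a point with \<open>|z| = \<rho>\<close>.
  For the soliton, \<open>lam^2 X = field_coeff |z| z\<close> where \<open>X = \<nabla>u / W\<close> is the field whose
  divergence is 2H, and \<open>disk_tilt\<close> and \<open>cos_angle\<close> are \<open>\<phi>\<close> and \<open>1/W\<close>.
  The value 4 at the centre is the limit (\<open>continuous_on_field_coeff\<close>).
\<close>

definition field_coeff :: "real \<Rightarrow> real" where
  "field_coeff \<rho> = (if \<rho> = 0 then 4 else flux (2 * artanh \<rho>) / \<rho>\<^sup>2)"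

definition disk_tilt :: "real \<Rightarrow> real" where
  "disk_tilt \<rho> = \<rho> * (1 - \<rho>\<^sup>2) / 2 * field_coeff \<rho>"

definition cos_angle :: "real \<Rightarrow> real" where
  "cos_angle \<rho> = sqrt (1 - (disk_tilt \<rho>)\<^sup>2)"

lemma disk_tilt_eq: "0 \<le> \<rho> \<Longrightarrow> \<rho> < 1 \<Longrightarrow> disk_tilt \<rho> = tilt (2 * artanh \<rho>)"
proof (cases "\<rho> = 0")
  case True
  then show ?thesis using tilt_bounds[of 0] by (simp add: disk_tilt_def)
next
  case False
  assume "0 \<le> \<rho>" "\<rho> < 1"
  define r where "r = 2 * artanh \<rho>"
  define q where "q = 1 - \<rho>\<^sup>2"
  have "0 < q" "0 < \<rho>"
    using False \<open>0 \<le> \<rho>\<close> \<open>\<rho> < 1\<close> sq_less_1[of \<rho>] by (simp_all add: q_def)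
  have flux_r: "flux r = 2 * \<rho> / q * tilt r"
    using \<open>0 \<le> \<rho>\<close> \<open>\<rho> < 1\<close> by (simp add: r_def q_def flux_eq artanh_nonneg sinh_2_artanh)
  have "disk_tilt \<rho> = \<rho> * q / 2 * (flux r / \<rho>\<^sup>2)"
    using False by (simp add: disk_tilt_def field_coeff_def r_def q_def)
  also have "\<dots> = tilt r"
    using \<open>0 < q\<close> \<open>0 < \<rho>\<close> by (simp add: flux_r field_simps power2_eq_square)
  finally show ?thesis by (simp add: r_def)
qed

lemma disk_tilt_bounds: "0 \<le> \<rho> \<Longrightarrow> \<rho> < 1 \<Longrightarrow> 0 \<le> disk_tilt \<rho> \<and> disk_tilt \<rho> \<le> 12/13"
  using tilt_bounds tilt_le by (simp add: disk_tilt_eq artanh_nonneg)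

lemma cos_angle_sq: "0 \<le> \<rho> \<Longrightarrow> \<rho> < 1 \<Longrightarrow> (cos_angle \<rho>)\<^sup>2 = 1 - (disk_tilt \<rho>)\<^sup>2"
  using disk_tilt_bounds[of \<rho>] by (simp add: cos_angle_def abs_square_le_1)

lemma cos_angle_ge: "0 \<le> \<rho> \<Longrightarrow> \<rho> < 1 \<Longrightarrow> 5/13 \<le> cos_angle \<rho>"
proof -
  assume "0 \<le> \<rho>" "\<rho> < 1"
  then have "(disk_tilt \<rho>)\<^sup>2 \<le> (12/13)\<^sup>2"
    using disk_tilt_bounds[of \<rho>] by (intro power_mono) auto
  then have "(5/13)\<^sup>2 \<le> 1 - (disk_tilt \<rho>)\<^sup>2" by (simp add: power2_eq_square)
  then show ?thesis unfolding cos_angle_def by (rule real_le_rsqrt)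
qed

lemma field_coeff_bounds:
  assumes "0 < \<rho>" "\<rho> < 1"
  shows "(1 - 4 * (2 * artanh \<rho>)\<^sup>2) * (4 / (1 - \<rho>\<^sup>2)) \<le> field_coeff \<rho>"
    and "field_coeff \<rho> \<le> 4 / (1 - \<rho>\<^sup>2)"
proof -
  define r where "r = 2 * artanh \<rho>"
  define q where "q = 1 - \<rho>\<^sup>2"
  have "0 \<le> r" using assms by (simp add: r_def artanh_nonneg)
  have "0 < q" "\<bar>\<rho>\<bar> < 1" using assms sq_less_1[of \<rho>] by (simp_all add: q_def)
  have cosh: "cosh r - 1 = 2 * \<rho>\<^sup>2 / q"
    using \<open>0 < q\<close> unfolding r_def cosh_2_artanh[OF \<open>\<bar>\<rho>\<bar> < 1\<close>] q_def
    by (simp add: field_simps)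
  have coeff: "field_coeff \<rho> = flux r / \<rho>\<^sup>2"
    using assms by (simp add: field_coeff_def r_def)
  have "(1 - 4 * r\<^sup>2) * (4 / q) * \<rho>\<^sup>2 = 2 * (1 - 4 * r\<^sup>2) * (cosh r - 1)"
    using \<open>0 < q\<close> unfolding cosh by (simp add: field_simps)
  then have "(1 - 4 * r\<^sup>2) * (4 / q) * \<rho>\<^sup>2 \<le> flux r"
    using flux_ge[OF \<open>0 \<le> r\<close>] by simp
  then show "(1 - 4 * (2 * artanh \<rho>)\<^sup>2) * (4 / (1 - \<rho>\<^sup>2)) \<le> field_coeff \<rho>"
    using assms unfolding r_def[symmetric] q_def[symmetric] coeff by (simp add: pos_le_divide_eq)
  have "4 / q * \<rho>\<^sup>2 = 2 * (cosh r - 1)"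
    using \<open>0 < q\<close> unfolding cosh by (simp add: field_simps)
  then have "flux r \<le> 4 / q * \<rho>\<^sup>2"
    using flux_le[OF \<open>0 \<le> r\<close>] by simp
  then show "field_coeff \<rho> \<le> 4 / (1 - \<rho>\<^sup>2)"
    using assms unfolding q_def[symmetric] coeff by (simp add: pos_divide_le_eq)
qed

definition field_coeff_deriv :: "real \<Rightarrow> real" where
  "field_coeff_deriv \<rho> = (8 * cos_angle \<rho> / (1 - \<rho>\<^sup>2)\<^sup>2 - 2 * field_coeff \<rho>) / \<rho>"

lemma field_coeff_has_derivative:
  assumes "0 < \<rho>" "\<rho> < 1"
  shows "(field_coeff has_real_derivative field_coeff_deriv \<rho>) (at \<rho>)"
proof -
  let ?r = "2 * artanh \<rho>"
  define q where "q = 1 - \<rho>\<^sup>2"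
  have "\<bar>\<rho>\<bar> < 1" "0 < q" "0 < ?r"
    using assms sq_less_1[of \<rho>] by (simp_all add: q_def artanh_def)
  have "((\<lambda>x. 2 * artanh x) has_real_derivative 2 / q) (at \<rho>)"
    using \<open>\<bar>\<rho>\<bar> < 1\<close> by (auto intro!: derivative_eq_intros simp: q_def)
  then have "((\<lambda>x. flux (2 * artanh x)) has_real_derivative soliton_rhs tilt ?r * (2 / q)) (at \<rho>)"
    by (rule DERIV_chain2[where g = "\<lambda>x. 2 * artanh x", OF flux_has_derivative[OF \<open>0 < ?r\<close>]])
  moreover have "soliton_rhs tilt ?r = 2 * (2 * \<rho> / q) * cos_angle \<rho>"
    using assms by (simp add: q_def soliton_rhs_def sinh_2_artanh trunc_cos_tilt artanh_nonneg
        cos_angle_def disk_tilt_eq)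
  ultimately have "((\<lambda>x. flux (2 * artanh x) / x\<^sup>2) has_real_derivative
      (2 * (2 * \<rho> / q) * cos_angle \<rho> * (2 / q) * \<rho>\<^sup>2 - flux ?r * (2 * \<rho>)) / (\<rho>\<^sup>2 * \<rho>\<^sup>2)) (at \<rho>)"
    using assms by (auto intro!: derivative_eq_intros)
  moreover have "flux ?r = \<rho>\<^sup>2 * field_coeff \<rho>"
    using assms by (simp add: field_coeff_def)
  moreover have "(2 * (2 * \<rho> / q) * cos_angle \<rho> * (2 / q) * \<rho>\<^sup>2 - \<rho>\<^sup>2 * field_coeff \<rho> * (2 * \<rho>))
      / (\<rho>\<^sup>2 * \<rho>\<^sup>2) = (8 * cos_angle \<rho> / q\<^sup>2 - 2 * field_coeff \<rho>) / \<rho>"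
    using assms \<open>0 < q\<close> by (simp add: field_simps power2_eq_square)
  moreover have "(8 * cos_angle \<rho> / q\<^sup>2 - 2 * field_coeff \<rho>) / \<rho> = field_coeff_deriv \<rho>"
    by (simp add: field_coeff_deriv_def q_def)
  ultimately have "((\<lambda>x. flux (2 * artanh x) / x\<^sup>2) has_real_derivative field_coeff_deriv \<rho>) (at \<rho>)"
    by simp
  then show ?thesis
    by (rule has_field_derivative_transform_within_open[where S = "{0<..}"])
      (use assms in \<open>auto simp: field_coeff_def\<close>)
qed

lemma field_coeff_radial_identity:
  "0 \<le> \<rho> \<Longrightarrow> \<rho> < 1 \<Longrightarrow> \<rho> * field_coeff_deriv \<rho> = 8 * cos_angle \<rho> / (1 - \<rho>\<^sup>2)\<^sup>2 - 2 * field_coeff \<rho>"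
  by (cases "\<rho> = 0") (simp_all add: field_coeff_deriv_def cos_angle_def disk_tilt_def field_coeff_def)

lemma continuous_on_field_coeff: "continuous_on {0..<1} field_coeff"
  unfolding continuous_on_eq_continuous_within
proof
  fix x :: real assume x: "x \<in> {0..<1}"
  show "continuous (at x within {0..<1}) field_coeff"
  proof (cases "x = 0")
    case True
    let ?lower = "\<lambda>\<rho>::real. (1 - 4 * (2 * artanh \<rho>)\<^sup>2) * (4 / (1 - \<rho>\<^sup>2))"
    let ?upper = "\<lambda>\<rho>::real. 4 / (1 - \<rho>\<^sup>2)"
    have "(field_coeff \<longlongrightarrow> 4) (at 0 within {0..<1})"
    proof (rule tendsto_sandwich[of ?lower _ _ ?upper])
      show "\<forall>\<^sub>F \<rho> in at 0 within {0..<1}. ?lower \<rho> \<le> field_coeff \<rho>"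
        and "\<forall>\<^sub>F \<rho> in at 0 within {0..<1}. field_coeff \<rho> \<le> 4 / (1 - \<rho>\<^sup>2)"
        using field_coeff_bounds by (auto simp: eventually_at_filter)
      have "isCont artanh (0::real)" by (rule isCont_artanh) simp_all
      then have lower: "isCont ?lower 0" and upper: "isCont ?upper 0"
        by (auto intro!: continuous_intros)
      show "(?lower \<longlongrightarrow> 4) (at 0 within {0..<1})"
        using tendsto_within_subset[OF isContD[OF lower] subset_UNIV] by simp
      show "(?upper \<longlongrightarrow> 4) (at 0 within {0..<1})"
        using tendsto_within_subset[OF isContD[OF upper] subset_UNIV] by simp
    qed
    then show ?thesis using True by (simp add: continuous_within field_coeff_def)
  next
    case False
    with x have "isCont field_coeff x"
      by (intro DERIV_isCont[OF field_coeff_has_derivative]) auto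
    then show ?thesis
      by (rule continuous_at_imp_continuous_within)
  qed
qed

lemma continuous_on_disk_tilt: "continuous_on {0..<1} disk_tilt"
  unfolding disk_tilt_def[abs_def] by (intro continuous_intros continuous_on_field_coeff) auto

lemma continuous_on_cos_angle: "continuous_on {0..<1} cos_angle"
  unfolding cos_angle_def[abs_def] by (intro continuous_intros continuous_on_disk_tilt)

lemma radially_C1_field_coeff: "radially_C1 field_coeff"
proof (rule radially_C1I[OF continuous_on_field_coeff field_coeff_has_derivative])
  have "continuous_on {0..<1} (\<lambda>\<rho>. 8 * cos_angle \<rho> / (1 - \<rho>\<^sup>2)\<^sup>2 - 2 * field_coeff \<rho>)"
    using sq_less_1
    by (intro continuous_intros continuous_on_cos_angle continuous_on_field_coeff) force
  then show "continuous_on {0..<1} (\<lambda>\<rho>. \<rho> * field_coeff_deriv \<rho>)"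
    by (rule continuous_on_eq) (simp add: field_coeff_radial_identity)
qed

lemma radially_C1_disk_tilt: "radially_C1 disk_tilt"
proof -
  have "radially_C1 (\<lambda>\<rho>. \<rho> * (1 - \<rho>\<^sup>2) / 2)"
  proof (rule radially_C1I[where g' = "\<lambda>\<rho>. (1 - 3 * \<rho>\<^sup>2) / 2"])
    show "((\<lambda>\<rho>. \<rho> * (1 - \<rho>\<^sup>2) / 2) has_real_derivative (1 - 3 * \<rho>\<^sup>2) / 2) (at \<rho>)" for \<rho> :: real
      by (auto intro!: derivative_eq_intros simp: field_simps power2_eq_square)
  qed (auto intro!: continuous_intros)
  then show ?thesis
    unfolding disk_tilt_def[abs_def] by (rule radially_C1_mult[OF _ radially_C1_field_coeff])
qed

definition grad_coeff :: "real \<Rightarrow> real" where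
  "grad_coeff \<rho> = field_coeff \<rho> / cos_angle \<rho>"

lemma radially_C1_grad_coeff: "radially_C1 grad_coeff"
proof -
  have deriv: "((\<lambda>x. inverse (sqrt (1 - x\<^sup>2))) has_real_derivative x / ((1 - x\<^sup>2) * sqrt (1 - x\<^sup>2))) (at x)"
    if "x \<in> {-1<..<1}" for x :: real
    using that abs_square_less_1[of x] by (intro has_real_derivative_inverse_sqrt_one_minus_sq) auto
  have "continuous_on {-1<..<1} (\<lambda>x::real. x / ((1 - x\<^sup>2) * sqrt (1 - x\<^sup>2)))"
  proof (intro continuous_intros ballI)
    fix x :: real assume "x \<in> {-1<..<1}"
    then have "0 < 1 - x\<^sup>2" using abs_square_less_1[of x] by auto
    then show "(1 - x\<^sup>2) * sqrt (1 - x\<^sup>2) \<noteq> 0" by simp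
  qed
  moreover have "disk_tilt \<rho> \<in> {-1<..<1}" if "\<rho> \<in> {0..<1}" for \<rho>
    using disk_tilt_bounds[of \<rho>] that by auto
  then have "disk_tilt ` {0..<1} \<subseteq> {-1<..<1}" by blast
  ultimately have "radially_C1 (\<lambda>\<rho>. inverse (sqrt (1 - (disk_tilt \<rho>)\<^sup>2)))"
    by (intro radially_C1_compose[OF radially_C1_disk_tilt _ _ deriv]) auto
  then have "radially_C1 (\<lambda>\<rho>. field_coeff \<rho> * inverse (sqrt (1 - (disk_tilt \<rho>)\<^sup>2)))"
    by (rule radially_C1_mult[OF radially_C1_field_coeff])
  then show ?thesis
    by (simp add: grad_coeff_def[abs_def] cos_angle_def divide_inverse)
qed

lemma continuous_on_grad_coeff: "continuous_on {0..<1} grad_coeff"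
  using radially_C1_grad_coeff by (auto elim: radially_C1E)

definition height :: "real \<Rightarrow> real" where
  "height s = integral {0..s} (\<lambda>\<tau>. grad_coeff (sqrt \<tau>) / 2)"

text \<open>Writing u as a function of \<open>|z|^2\<close> makes it differentiable at the centre by the chain rule.\<close>

definition soliton :: "complex \<Rightarrow> real" where
  "soliton z = height ((cmod z)\<^sup>2)"

lemma soliton_has_derivative:
  assumes z: "z \<in> hdisk"
  shows "(soliton has_derivative (\<lambda>v. grad_coeff (cmod z) * (z \<bullet> v))) (at z)"
proof -
  have "continuous_on {0..<1} (\<lambda>\<tau>. grad_coeff (sqrt \<tau>) / 2)"
    by (intro continuous_intros continuous_on_compose2[OF continuous_on_grad_coeff]) auto
  then have "(height has_real_derivative grad_coeff (sqrt s) / 2) (at s within {0..<1})"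
    if "s \<in> {0..<1}" for s
    unfolding height_def[abs_def] using that by (rule integral_has_real_derivative_atLeastLessThan)
  then have height: "(height has_derivative (*) (grad_coeff (sqrt s) / 2)) (at s within {0..<1})"
    if "s \<in> {0..<1}" for s
    using that unfolding has_field_derivative_def .
  have image: "(\<lambda>w. w \<bullet> w) ` hdisk \<subseteq> {0..<1}"
    by (auto simp: hdisk_def power2_norm_eq_inner[symmetric] abs_square_less_1)
  have "((\<lambda>w. w \<bullet> w) has_derivative (\<lambda>v. z \<bullet> v + v \<bullet> z)) (at z within hdisk)"
    by (auto intro!: derivative_eq_intros)
  then have "((\<lambda>w. height (w \<bullet> w)) has_derivative
      (\<lambda>v. grad_coeff (sqrt (z \<bullet> z)) / 2 * (z \<bullet> v + v \<bullet> z))) (at z within hdisk)"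
    using has_derivative_in_compose2[OF height image z] by simp
  moreover have "at z within hdisk = at z"
    using z by (intro at_within_open) (simp_all add: hdisk_def)
  moreover have "(\<lambda>w. height (w \<bullet> w)) = soliton"
    by (simp add: soliton_def[abs_def] power2_norm_eq_inner)
  ultimately show ?thesis
    by (simp add: power2_norm_eq_inner[symmetric] inner_commute)
qed

lemma egrad_soliton:
  assumes "z \<in> hdisk"
  shows "egrad soliton z = grad_coeff (cmod z) *\<^sub>R z"
proof -
  have "frechet_derivative soliton (at z) = (\<lambda>v. grad_coeff (cmod z) * (z \<bullet> v))"
    using frechet_derivative_at[OF soliton_has_derivative[OF assms]] by simp
  then show ?thesis
    by (simp add: egrad_def complex_eq_iff inner_complex_def)
qed

lemma C2_on_disk_soliton: "C2_on_disk soliton"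
proof -
  let ?F = "\<lambda>w::complex. grad_coeff (cmod w) *\<^sub>R w"
  have open_disk: "open hdisk" by (simp add: hdisk_def)
  have field_diff: "?F differentiable (at z)" if "z \<in> hdisk" for z
    using radially_C1_field(1)[OF radially_C1_grad_coeff, where 'a = complex] that
    by (auto simp: hdisk_def)
  have field_cont: "continuous_on hdisk (\<lambda>z. frechet_derivative ?F (at z) v)" for v
    using radially_C1_field(2)[OF radially_C1_grad_coeff, where 'a = complex] by (simp add: hdisk_def)
  have egrad_eq: "?F w = egrad soliton w" if "w \<in> hdisk" for w
    using that by (simp add: egrad_soliton)
  have egrad_diff: "egrad soliton differentiable (at z)" if z: "z \<in> hdisk" for z
  proof -
    obtain D where "(?F has_derivative D) (at z)"
      using field_diff[OF z] by (auto simp: differentiable_def)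
    then have "(egrad soliton has_derivative D) (at z)"
      by (rule has_derivative_transform_within_open[OF _ open_disk z egrad_eq])
    then show ?thesis by (rule differentiableI)
  qed
  have frechet_eq: "frechet_derivative ?F (at z) = frechet_derivative (egrad soliton) (at z)"
    if "z \<in> hdisk" for z
    by (rule frechet_derivative_transform_within_open[OF field_diff[OF that] open_disk that egrad_eq])
  have "continuous_on hdisk ?F"
    unfolding hdisk_def
    by (intro continuous_on_scaleR continuous_on_id continuous_on_radial continuous_on_grad_coeff)
  then have "continuous_on hdisk (egrad soliton)"
    by (rule continuous_on_eq) (rule egrad_eq)
  moreover have "continuous_on hdisk (\<lambda>z. frechet_derivative (egrad soliton) (at z) v)" for v
    by (rule continuous_on_eq[OF field_cont]) (simp add: frechet_eq)
  ultimately show ?thesis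
    unfolding C2_on_disk_def using soliton_has_derivative egrad_diff by (blast intro: differentiableI)
qed

lemma lam_sq: "(lam z)\<^sup>2 = 4 / (1 - (cmod z)\<^sup>2)\<^sup>2"
  by (simp add: lam_def power_divide)

lemma hgrad_soliton: "z \<in> hdisk \<Longrightarrow> hgrad soliton z = (grad_coeff (cmod z) / (lam z)\<^sup>2) *\<^sub>R z"
  by (simp add: hgrad_def egrad_soliton)

lemma Wg_soliton:
  assumes z: "z \<in> hdisk"
  shows "Wg soliton z = 1 / cos_angle (cmod z)"
proof -
  let ?r = "cmod z" and ?S = "cos_angle (cmod z)"
  have r: "0 \<le> ?r" "?r < 1" using z by (simp_all add: hdisk_def)
  then have "0 < 1 - ?r\<^sup>2" "0 < ?S" using sq_less_1 cos_angle_ge[OF r] by auto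
  have "hnormsq z (hgrad soliton z) = (lam z)\<^sup>2 * (grad_coeff ?r / (lam z)\<^sup>2)\<^sup>2 * ?r\<^sup>2"
    by (simp add: hnormsq_def hgrad_soliton[OF z] power_mult_distrib power_divide)
  also have "\<dots> = (disk_tilt ?r / ?S)\<^sup>2"
  proof -
    have "4 / q\<^sup>2 * (Y / S / (4 / q\<^sup>2))\<^sup>2 * \<rho>\<^sup>2 = (\<rho> * q / 2 * Y / S)\<^sup>2" if "0 < q" for Y S \<rho> q :: real
      using that by (simp add: field_simps power2_eq_square)
    then show ?thesis
      using \<open>0 < 1 - ?r\<^sup>2\<close> by (simp add: lam_sq grad_coeff_def disk_tilt_def)
  qed
  finally have "1 + hnormsq z (hgrad soliton z) = (1 / ?S)\<^sup>2"
    using \<open>0 < ?S\<close> cos_angle_sq[OF r] by (simp add: field_simps power2_eq_square)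
  then show ?thesis
    using \<open>0 < ?S\<close> by (simp add: Wg_def)
qed

lemma normal_vert_soliton: "z \<in> hdisk \<Longrightarrow> normal_vert soliton z = cos_angle (cmod z)"
  by (simp add: normal_vert_def Wg_soliton)

lemma scaled_unit_field_soliton:
  assumes z: "z \<in> hdisk"
  shows "(lam z)\<^sup>2 *\<^sub>R graph_unit_field soliton z = field_coeff (cmod z) *\<^sub>R z"
proof -
  have r: "0 \<le> cmod z" "cmod z < 1" using z by (simp_all add: hdisk_def)
  have "0 < cos_angle (cmod z)" "0 < (lam z)\<^sup>2"
    using cos_angle_ge[OF r] sq_less_1[OF r] by (auto simp: lam_sq)
  then show ?thesis
    by (simp add: graph_unit_field_def Wg_soliton[OF z] hgrad_soliton[OF z] grad_coeff_def)
qed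

lemma graph_mean_curv_soliton:
  assumes z: "z \<in> hdisk"
  shows "graph_mean_curv soliton z = cos_angle (cmod z)"
proof -
  let ?r = "cmod z" and ?X = "\<lambda>w. (lam w)\<^sup>2 *\<^sub>R graph_unit_field soliton w"
  have r: "0 \<le> ?r" "?r < 1" using z by (simp_all add: hdisk_def)
  have deriv: "((\<lambda>w. field_coeff (cmod w) *\<^sub>R w) has_derivative
      (\<lambda>v. field_coeff ?r *\<^sub>R v + (field_coeff_deriv ?r * (z \<bullet> v) / ?r) *\<^sub>R z)) (at z)"
    using r by (intro has_derivative_radial_field continuous_on_field_coeff field_coeff_has_derivative)
  have "field_coeff (cmod w) *\<^sub>R w = ?X w" if "w \<in> hdisk" for w
    using scaled_unit_field_soliton[OF that] by simp
  then have "frechet_derivative (\<lambda>w. field_coeff (cmod w) *\<^sub>R w) (at z) = frechet_derivative ?X (at z)"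
    using differentiableI[OF deriv] z
    by (intro frechet_derivative_transform_within_open[of _ _ hdisk]) (auto simp: hdisk_def)
  then have "ediv ?X z = ediv (\<lambda>w. field_coeff (cmod w) *\<^sub>R w) z"
    by (simp add: ediv_def)
  also have "\<dots> = 2 * field_coeff ?r + field_coeff_deriv ?r * ?r"
    using r by (intro ediv_radial_field continuous_on_field_coeff field_coeff_has_derivative)
  also have "\<dots> = 8 * cos_angle ?r / (1 - ?r\<^sup>2)\<^sup>2"
    using field_coeff_radial_identity[OF r] by (simp add: mult.commute)
  finally have "ediv ?X z = 8 * cos_angle ?r / (1 - ?r\<^sup>2)\<^sup>2" .
  moreover have "0 < 1 - ?r\<^sup>2" using sq_less_1[OF r] by simp
  ultimately show ?thesis
    by (simp add: graph_mean_curv_def hdiv_def lam_sq)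
qed

lemma entire_upward_translator_graph_soliton: "entire_upward_translator_graph soliton"
  unfolding entire_upward_translator_graph_def
proof (intro conjI C2_on_disk_soliton ballI)
  fix z assume z: "z \<in> hdisk"
  then have "0 \<le> cmod z" "cmod z < 1" by (simp_all add: hdisk_def)
  then show "0 < normal_vert soliton z"
    using cos_angle_ge by (simp add: normal_vert_soliton[OF z] less_le_trans[of 0 "5/13"])
  show "graph_mean_curv soliton z = normal_vert soliton z"
    by (simp add: graph_mean_curv_soliton[OF z] normal_vert_soliton[OF z])
qed

lemma rot_symmetric_soliton: "rot_symmetric 0 soliton"
  by (simp add: rot_symmetric_def hrot_def mob_def soliton_def norm_mult)

theorem theorem3p3:
  shows "\<exists>u :: complex \<Rightarrow> real. \<exists>p \<in> hdisk.
           entire_upward_translator_graph u \<and> rot_symmetric p u"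
proof (intro exI[of _ soliton] bexI[of _ 0] conjI)
  show "entire_upward_translator_graph soliton" by (rule entire_upward_translator_graph_soliton)
  show "rot_symmetric 0 soliton" by (rule rot_symmetric_soliton)
  show "0 \<in> hdisk" by (simp add: hdisk_def)
qed

end
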